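(* Let $G=(V,E)$ be a social network with seller $s$ and buyers $N$, and let the fair diffusion mechanism (FDM) be as defined in the context. For every feasible action profile $a$, the seller's revenue under FDM, $\sum_{i\in N}p_i(a)$, is at least the seller's revenue under IDM, namely $v^{1^{st}}_{N_{-c_1}}$ (where $c_1$ is the first element of the strong critical ancestor sequence of the highest bidder $h$), and this in turn is at least the seller's revenue $v^{2^{nd}}_{r_s}$ of the Vickrey (second-price) auction held only among the seller's neighbours $r_s$, where $v^{2^{nd}}_{r_s}$ denotes the second-highest reported valuation among $r_s$.
   Context: Model. A seller $s$ sells one item on an undirected graph $G=(V,E)$ with $V=N\cup\{s\}$, $N=\{1,\dots,n\}$ the buyers. Each buyer $i$ has neighbour set $r_i\subseteq V$ and private valuation $v_i\ge 0$; her type is $\theta_i=(v_i,r_i)$; the seller's valuation is $0$ and $r_s$ denotes the seller's neighbours. Each buyer reports an action $a_i=(v_i',r_i')$ with $v_i'\ge0$ the reported valuation and $r_i'\subseteq r_i$ the neighbours she invites, or $a_i=nil$ if she does not participate. A profile $a$ is feasible if every $i$ with $a_i\neq nil$ is reachable by a path $s,k_1,\dots,k_m,i$ with $k_1\in r_s$, $k_{t+1}\in r'_{k_t}$ and $i\in r'_{k_m}$. All graph notions below refer to this reported network (participating buyers, with $j$ reachable from $i$ when $j\in r_i'$, and from $s$ when $j\in r_s$); $d_i$ is the length of the shortest such path from $s$ to $i$. A mechanism gives an allocation $\pi_i(a)\in\{0,1\}$ (at most one winner) and payments $p_i(a)\in\mathbb{R}$ (negative means $i$ receives money); the seller's revenue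 is $\sum_{i\in N}p_i(a)$. Definitions. A set $D\subseteq N$ is a cut set of buyer $i$ if no path from $s$ to $i$ exists without $D$; it is a minimal cut set if no proper subset is a cut set. $j$ is a critical ancestor of $i$ if $j$ belongs to a minimal cut set of $i$; a strong critical ancestor if $\{j\}$ is a minimal cut set of $i$; a weak critical ancestor if critical but not strong. $V_i=\{j\in N: i$ is a strong critical ancestor of $j\}$ (so $i\in V_i$); for $K\subseteq N$, $N_{-K}=N\setminus\bigcup_{i\in K}V_i$, and $N_{-i}=N_{-\{i\}}$. For $D\subseteq N$, $v_D^{1^{st}}=\max_{i\in D}v_i'$, and $g_D^{1^{st}}\in\arg\max_{i\in D}v^{1^{st}}_{V_i}$ (random tie-breaking). The strong critical ancestor sequence of $i$ is $C_i=(c_1^i,\dots,c_k^i)$, the strong critical ancestors of $i$ ordered by strictly increasing depth, with $c_k^i=i$. FDM. Let $h\in\arg\max_{i\in N}v_i'$ (random tie-breaking) and $C=(c_1,\dots,c_h)$ its strong critical ancestor sequence. For consecutive $c_j,c_{j+1}$, let $M_{c_jc_{j+1}}$ be the set of weak critical ancestors of $h$ lying on some simple path from $c_j$ to $c_{j+1}$ (for the last element the corresponding set $\{c_{j+1}\}\cup M_{c_jc_{j+1}}$ is empty). Allocation: the item goes to the first $c_j\in C$ (smallest $j$) with $v'_{c_j}=v^{1^{st}}_{N_{-(\{c_{j+1}\}\cup M_{c_jc_{j+1}})}}$; call it $c_w$, and let $\hat C=(c_1,\dots,c_w)$. Rewards: for $c_j\in\hat C$ (with $j\ge 2$), $R_{c_j}=\big(v^{1^{st}}_{N_{-(\{c_j\}\cup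 \{g^{1^{st}}_{M_{c_{j-1}c_j}}\})}}-v^{1^{st}}_{N_{-(\{c_j\}\cup M_{c_{j-1}c_j})}}\big)/(|M_{c_{j-1}c_j}|+1)$; for $i\in M_{c_{j-1}c_j}$, $R_i=\big(v^{1^{st}}_{N_{-(\{i\}\cup\{c_j\})}}-v^{1^{st}}_{N_{-(\{c_j\}\cup M_{c_{j-1}c_j})}}\big)/(|M_{c_{j-1}c_j}|+1)$; otherwise $R_i=0$. Payments: $p_{c_j}=v^{1^{st}}_{N_{-c_j}}-v^{1^{st}}_{N_{-(\{c_{j+1}\}\cup M_{c_jc_{j+1}})}}-R_{c_j}$ for $c_j\in\hat C$, $j<w$; $p_{c_w}=v^{1^{st}}_{N_{-c_w}}-R_{c_w}$; $p_i=-R_i$ for $i\in M_{c_{j-1}c_j}$, $2\le j\le w$; $p_i=0$ otherwise. IDM (the information diffusion mechanism of Li et al.) yields seller revenue $v^{1^{st}}_{N_{-c_1}}$ on the same profile. *)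

theory Defs
  imports Complex_Main
begin

text \<open>An action profile is act :: 'a => (real * 'a set) option, where None = nil (no
  participation) and Some (v', r') = (reported valuation, invited neighbours).\<close>

definition valid_network :: "'a \<Rightarrow> 'a set \<Rightarrow> 'a set \<Rightarrow> ('a \<Rightarrow> 'a set) \<Rightarrow> bool" where
  "valid_network s N rs r \<longleftrightarrow> finite N \<and> s \<notin> N \<and> rs \<subseteq> N \<and>
     (\<forall>i\<in>N. r i \<subseteq> insert s N - {i}) \<and>
     (\<forall>i\<in>N. \<forall>j\<in>N. j \<in> r i \<longleftrightarrow> i \<in> r j) \<and>
     (\<forall>i\<in>N. i \<in> rs \<longleftrightarrow> s \<in> r i)"

definition part :: "'a set \<Rightarrow> ('a \<Rightarrow> (real \<times> 'a set) option) \<Rightarrow> 'a set" where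
  "part N act = {i \<in> N. act i \<noteq> None}"

definition rval :: "('a \<Rightarrow> (real \<times> 'a set) option) \<Rightarrow> 'a \<Rightarrow> real" where
  "rval act i = fst (the (act i))"

definition rinv :: "('a \<Rightarrow> (real \<times> 'a set) option) \<Rightarrow> 'a \<Rightarrow> 'a set" where
  "rinv act i = snd (the (act i))"

definition redge :: "'a \<Rightarrow> 'a set \<Rightarrow> 'a set \<Rightarrow> ('a \<Rightarrow> (real \<times> 'a set) option) \<Rightarrow> 'a \<Rightarrow> 'a \<Rightarrow> bool" where
  "redge s rs N act x y \<longleftrightarrow> y \<in> part N act \<and>
     ((x = s \<and> y \<in> rs) \<or> (x \<in> part N act \<and> y \<in> rinv act x))"

definition redges :: "'a \<Rightarrow> 'a set \<Rightarrow> 'a set \<Rightarrow> ('a \<Rightarrow> (real \<times> 'a set) option) \<Rightarrow> ('a \<times> 'a) set" where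
  "redges s rs N act = {(x, y). redge s rs N act x y}"

definition feasible :: "'a \<Rightarrow> 'a set \<Rightarrow> 'a set \<Rightarrow> ('a \<Rightarrow> 'a set) \<Rightarrow> ('a \<Rightarrow> (real \<times> 'a set) option) \<Rightarrow> bool" where
  "feasible s N rs r act \<longleftrightarrow>
     (\<forall>i\<in>part N act. rval act i \<ge> 0 \<and> rinv act i \<subseteq> r i \<and> (s, i) \<in> (redges s rs N act)\<^sup>+)"

definition reach_avoid :: "'a \<Rightarrow> 'a set \<Rightarrow> 'a set \<Rightarrow> ('a \<Rightarrow> (real \<times> 'a set) option) \<Rightarrow> 'a set \<Rightarrow> 'a \<Rightarrow> bool" where
  "reach_avoid s rs N act D i \<longleftrightarrow> (s, i) \<in> {(x, y). redge s rs N act x y \<and> y \<notin> D}\<^sup>+"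

definition cut_set where
  "cut_set s rs N act D i \<longleftrightarrow> D \<subseteq> part N act \<and> \<not> reach_avoid s rs N act D i"

definition min_cut_set where
  "min_cut_set s rs N act D i \<longleftrightarrow> cut_set s rs N act D i \<and> (\<forall>D'. D' \<subset> D \<longrightarrow> \<not> cut_set s rs N act D' i)"

definition critical_anc where
  "critical_anc s rs N act j i \<longleftrightarrow> (\<exists>D. min_cut_set s rs N act D i \<and> j \<in> D)"

definition strong_anc where
  "strong_anc s rs N act j i \<longleftrightarrow> min_cut_set s rs N act {j} i"

definition weak_anc where
  "weak_anc s rs N act j i \<longleftrightarrow> critical_anc s rs N act j i \<and> \<not> strong_anc s rs N act j i"

definition Vset where
  "Vset s rs N act i = {j \<in> part N act. strong_anc s rs N act i j}"

definition Nminus where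
  "Nminus s rs N act K = part N act - (\<Union>i\<in>K. Vset s rs N act i)"

definition v1st :: "('a \<Rightarrow> (real \<times> 'a set) option) \<Rightarrow> 'a set \<Rightarrow> real" where
  "v1st act D = Max (insert 0 (rval act ` D))"

text \<open>Second highest reported valuation in D: remove a top bidder and take the highest
  of the rest (0 if there are fewer than two bidders).\<close>
definition v2nd :: "('a \<Rightarrow> (real \<times> 'a set) option) \<Rightarrow> 'a set \<Rightarrow> real" where
  "v2nd act D = (if D = {} then 0 else Min ((\<lambda>k. v1st act (D - {k})) ` D))"

definition depth where
  "depth s rs N act i = (LEAST k. (s, i) \<in> (redges s rs N act) ^^ k)"

definition sca_seq where
  "sca_seq s rs N act i = (THE C. sorted_wrt (\<lambda>x y. depth s rs N act x < depth s rs N act y) C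
        \<and> set C = {j. strong_anc s rs N act j i})"

definition simple_path where
  "simple_path s rs N act x y xs \<longleftrightarrow> xs \<noteq> [] \<and> hd xs = x \<and> last xs = y \<and> distinct xs \<and>
     (\<forall>k. Suc k < length xs \<longrightarrow> redge s rs N act (xs ! k) (xs ! Suc k))"

definition Mset where
  "Mset s rs N act h x y = {m. weak_anc s rs N act m h \<and>
      (\<exists>xs. simple_path s rs N act x y xs \<and> m \<in> set xs)}"

text \<open>FDM, given the highest bidder h and the tie-breaking rule g for g^{1st}.
  Indices into the list C = sca_seq h are 0-based: C!j is c_{j+1} of the paper.\<close>
definition fdm_M where
  "fdm_M s rs N act h j = (let C = sca_seq s rs N act h in Mset s rs N act h (C ! j) (C ! Suc j))"

definition fdm_K where
  "fdm_K s rs N act h j = (let C = sca_seq s rs N act h in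
     if Suc j < length C then insert (C ! Suc j) (fdm_M s rs N act h j) else {})"

definition fdm_w where
  "fdm_w s rs N act h = (let C = sca_seq s rs N act h in
     LEAST j. j < length C \<and> rval act (C ! j) = v1st act (Nminus s rs N act (fdm_K s rs N act h j)))"

definition gset :: "('a set \<Rightarrow> 'a) \<Rightarrow> 'a set \<Rightarrow> 'a set" where
  "gset g D = (if D = {} then {} else {g D})"

text \<open>Reward of c_{j+1} (0-based index j), nonzero only for 1 <= j <= w.\<close>
definition fdm_Rc where
  "fdm_Rc s rs N act h g j = (let C = sca_seq s rs N act h; w = fdm_w s rs N act h;
      M = fdm_M s rs N act h (j - 1) in
     if 1 \<le> j \<and> j \<le> w then
       (v1st act (Nminus s rs N act (insert (C ! j) (gset g M)))
        - v1st act (Nminus s rs N act (insert (C ! j) M))) / (real (card M) + 1)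
     else 0)"

text \<open>Reward of i in M_{c_j c_{j+1}} (0-based: M between C!(j-1) and C!j).\<close>
definition fdm_RM where
  "fdm_RM s rs N act h j i = (let C = sca_seq s rs N act h; M = fdm_M s rs N act h (j - 1) in
       (v1st act (Nminus s rs N act {i, C ! j})
        - v1st act (Nminus s rs N act (insert (C ! j) M))) / (real (card M) + 1))"

definition fdm_pay where
  "fdm_pay s rs N act h g i = (let C = sca_seq s rs N act h; w = fdm_w s rs N act h in
     if \<exists>j. j \<le> w \<and> j < length C \<and> C ! j = i then
       (let j = (LEAST j. j < length C \<and> C ! j = i) in
         if j < w then v1st act (Nminus s rs N act {C ! j})
                       - v1st act (Nminus s rs N act (fdm_K s rs N act h j)) - fdm_Rc s rs N act h g j
         else v1st act (Nminus s rs N act {C ! j}) - fdm_Rc s rs N act h g j)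
     else if \<exists>j. 1 \<le> j \<and> j \<le> w \<and> i \<in> fdm_M s rs N act h (j - 1) then
       (let j = (LEAST j. 1 \<le> j \<and> j \<le> w \<and> i \<in> fdm_M s rs N act h (j - 1)) in
         - fdm_RM s rs N act h j i)
     else 0)"

definition fdm_revenue where
  "fdm_revenue s rs N act h g = (\<Sum>i\<in>part N act. fdm_pay s rs N act h g i)"

end

theory Submission
  imports Defs
begin

(* Every neighbour of the seller other than c_1 is invited by s directly, so it is not in V_{c_1}:
   all seller neighbours but one lie in N_{-c_1}, which bounds the Vickrey revenue by v(N_{-c_1}).
   Along the sequence c_1, ..., c_w the FDM payments telescope to v(N_{-c_1}) plus, for every later
   c_j, the marginal contribution v(N_{-c_j}) - v(N_{-({c_j} \<union> M)}) of its segment, where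
   M = M_{c_{j-1}c_j}. The rewards of that segment, to c_j and to each member of M, are |M| + 1
   amounts, each at most a 1/(|M| + 1) share of this contribution, so they never exceed it. *)

lemma v1st_mono: "finite B \<Longrightarrow> A \<subseteq> B \<Longrightarrow> v1st act A \<le> v1st act B"
  unfolding v1st_def by (rule Max_mono) auto

lemma v1st_nonneg: "finite D \<Longrightarrow> 0 \<le> v1st act D"
  unfolding v1st_def by (rule Max_ge) auto

lemma v1st_eq_rval:
  assumes "finite D" "h \<in> D" "0 \<le> rval act h" "\<forall>j\<in>D. rval act j \<le> rval act h"
  shows "v1st act D = rval act h"
  unfolding v1st_def by (rule Max_eqI) (use assms in auto)

lemma v2nd_le_v1st_Diff:
  assumes "finite D" "k \<in> D"
  shows "v2nd act D \<le> v1st act (D - {k})"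
  unfolding v2nd_def using assms by (auto intro!: Min_le)

lemma Nminus_subset_part: "Nminus s rs N act K \<subseteq> part N act"
  unfolding Nminus_def by auto

lemma Nminus_antimono: "K \<subseteq> K' \<Longrightarrow> Nminus s rs N act K' \<subseteq> Nminus s rs N act K"
  unfolding Nminus_def by auto

lemma Nminus_empty [simp]: "Nminus s rs N act {} = part N act"
  unfolding Nminus_def by simp

lemma sorted_wrt_key_distinct:
  fixes f :: "'a \<Rightarrow> 'b :: order"
  shows "sorted_wrt (\<lambda>x y. f x < f y) xs \<Longrightarrow> distinct xs"
  by (induction xs) auto

lemma sorted_wrt_key_last:
  fixes f :: "'a \<Rightarrow> 'b :: order"
  assumes sorted: "sorted_wrt (\<lambda>x y. f x < f y) xs"
    and x: "x \<in> set xs" and top: "\<forall>y\<in>set xs. f y \<le> f x"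
  shows "last xs = x"
proof (rule ccontr)
  assume x_not_last: "last xs \<noteq> x"
  obtain ys where xs: "xs = ys @ [last xs]"
    using x by (metis append_butlast_last_id empty_iff list.set(1))
  have "x \<in> set ys" using x x_not_last by (subst (asm) xs) auto
  then have "f x < f (last xs)" using sorted by (subst (asm) xs) (auto simp: sorted_wrt_append)
  moreover have "f (last xs) \<le> f x" using top x by (metis empty_iff last_in_set list.set(1))
  ultimately show False by simp
qed

lemma ex1_sorted_wrt_key:
  fixes f :: "'a \<Rightarrow> 'b :: linorder"
  assumes fin: "finite S" and inj: "inj_on f S"
  shows "\<exists>!xs. sorted_wrt (\<lambda>x y. f x < f y) xs \<and> set xs = S"
proof -
  obtain xs where xs: "set xs = S" "distinct xs" using finite_distinct_list[OF fin] by blast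
  let ?C = "sort_key f xs"
  have "distinct (map f ?C)" using xs inj by (simp add: distinct_map)
  then have "sorted_wrt (<) (map f ?C)" by (simp add: strict_sorted_iff)
  then have C: "sorted_wrt (\<lambda>x y. f x < f y) ?C \<and> set ?C = S"
    using xs by (simp add: sorted_wrt_map)
  show ?thesis
  proof (rule ex1I[of _ ?C])
    show "sorted_wrt (\<lambda>x y. f x < f y) ?C \<and> set ?C = S" by (fact C)
    fix D assume D: "sorted_wrt (\<lambda>x y. f x < f y) D \<and> set D = S"
    have "map f D = map f ?C"
      using D C by (intro strict_sorted_equal) (auto simp: sorted_wrt_map)
    moreover have "inj_on f (set D \<union> set ?C)" using D C inj by simp
    ultimately show "D = ?C" using inj_on_map_eq_map by blast
  qed
qed

lemma strong_anc_in_part: "strong_anc s rs N act j i \<Longrightarrow> j \<in> part N act"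
  unfolding strong_anc_def min_cut_set_def cut_set_def by simp

lemma strong_anc_on_path:
  assumes anc: "strong_anc s rs N act j i"
    and path: "f 0 = s" "f n = i" "0 < n" "\<forall>m<n. (f m, f (Suc m)) \<in> redges s rs N act"
  shows "\<exists>p\<le>n. f p = j"
proof (rule ccontr)
  assume "\<not> ?thesis"
  then have "\<forall>m<n. (f m, f (Suc m)) \<in> {(x, y). redge s rs N act x y \<and> y \<notin> {j}}"
    using path(4) by (auto simp: redges_def)
  then have "reach_avoid s rs N act {j} i"
    unfolding reach_avoid_def using path(1-3) by (auto simp: trancl_power relpow_fun_conv)
  with anc show False unfolding strong_anc_def min_cut_set_def cut_set_def by simp
qed

lemma strong_anc_self:
  assumes "i \<in> part N act" "(s, i) \<in> (redges s rs N act)\<^sup>+"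
  shows "strong_anc s rs N act i i"
proof -
  have "\<not> reach_avoid s rs N act {i} i"
    unfolding reach_avoid_def by (auto elim: tranclE)
  moreover have "{(x, y). redge s rs N act x y \<and> y \<notin> {}} = redges s rs N act"
    by (auto simp: redges_def)
  then have "reach_avoid s rs N act {} i" unfolding reach_avoid_def using assms(2) by simp
  ultimately show ?thesis using assms(1)
    unfolding strong_anc_def min_cut_set_def cut_set_def by (auto simp: subset_singleton_iff)
qed

lemma seller_neighbour_notin_Vset:
  assumes "x \<in> rs \<inter> part N act" "x \<noteq> c"
  shows "x \<notin> Vset s rs N act c"
proof -
  have "reach_avoid s rs N act {c} x"
    unfolding reach_avoid_def using assms by (auto simp: redge_def)
  then show ?thesis unfolding Vset_def strong_anc_def min_cut_set_def cut_set_def by auto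
qed

lemma v2nd_seller_neighbours_le_v1st_Nminus:
  assumes fin: "finite (part N act)"
  shows "v2nd act (rs \<inter> part N act) \<le> v1st act (Nminus s rs N act {c})"
proof (cases "rs \<inter> part N act = {}")
  case True
  then show ?thesis
    using v1st_nonneg[OF finite_subset[OF Nminus_subset_part fin]] by (simp add: v2nd_def)
next
  case False
  let ?D = "rs \<inter> part N act"
  obtain k where k: "k \<in> ?D" "?D - {k} \<subseteq> ?D - {c}"
    using False by (cases "c \<in> ?D") auto
  have "?D - {c} \<subseteq> Nminus s rs N act {c}"
    using seller_neighbour_notin_Vset unfolding Nminus_def by fast
  then have "v1st act (?D - {k}) \<le> v1st act (Nminus s rs N act {c})"
    using k(2) finite_subset[OF Nminus_subset_part fin] by (intro v1st_mono) auto
  moreover have "v2nd act ?D \<le> v1st act (?D - {k})"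
    using k(1) fin by (intro v2nd_le_v1st_Diff) auto
  ultimately show ?thesis by linarith
qed

locale reported_network =
  fixes s :: 'a and N rs :: "'a set" and r :: "'a \<Rightarrow> 'a set"
    and act :: "'a \<Rightarrow> (real \<times> 'a set) option"
  assumes valid: "valid_network s N rs r" and feasible: "feasible s N rs r act"
begin

abbreviation P :: "'a set" where "P \<equiv> part N act"

abbreviation R :: "('a \<times> 'a) set" where "R \<equiv> redges s rs N act"

lemma finite_part: "finite P"
  using valid unfolding valid_network_def part_def by simp

lemma seller_notin_part: "s \<notin> P"
  using valid unfolding valid_network_def part_def by auto

lemma rval_nonneg: "i \<in> P \<Longrightarrow> 0 \<le> rval act i"
  using feasible unfolding feasible_def by blast

lemma finite_Nminus: "finite (Nminus s rs N act X)"
  using finite_subset[OF Nminus_subset_part finite_part] .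

lemma reachable: "i \<in> P \<Longrightarrow> (s, i) \<in> R\<^sup>+"
  using feasible unfolding feasible_def by blast

lemma depth_le: "(s, i) \<in> R ^^ k \<Longrightarrow> depth s rs N act i \<le> k"
  unfolding depth_def by (rule Least_le)

lemma shortest_path:
  assumes "i \<in> P"
  obtains f where "f 0 = s" "f (depth s rs N act i) = i"
    "\<forall>m<depth s rs N act i. (f m, f (Suc m)) \<in> R"
proof -
  obtain n where "(s, i) \<in> R ^^ n" using reachable[OF assms] trancl_power by blast
  then have "(s, i) \<in> R ^^ depth s rs N act i" unfolding depth_def by (rule LeastI)
  then show thesis using that unfolding relpow_fun_conv by blast
qed

lemma depth_on_shortest_path:
  assumes i: "i \<in> P" and path: "f 0 = s" "f (depth s rs N act i) = i"
      "\<forall>m<depth s rs N act i. (f m, f (Suc m)) \<in> R"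
    and p: "p \<le> depth s rs N act i" "f p \<in> P"
  shows "depth s rs N act (f p) = p"
proof -
  let ?d = "depth s rs N act"
  have "(s, f p) \<in> R ^^ p"
    unfolding relpow_fun_conv using path p by auto
  then have le: "?d (f p) \<le> p" by (rule depth_le)
  obtain g where g: "g 0 = s" "g (?d (f p)) = f p" "\<forall>m<?d (f p). (g m, g (Suc m)) \<in> R"
    using shortest_path[OF p(2)] by blast
  have "(f p, i) \<in> R ^^ (?d i - p)"
    unfolding relpow_fun_conv using path p by (intro exI[of _ "\<lambda>m. f (p + m)"]) auto
  moreover have "(s, f p) \<in> R ^^ ?d (f p)"
    unfolding relpow_fun_conv using g by blast
  ultimately have "(s, i) \<in> R ^^ (?d (f p) + (?d i - p))" by (auto simp: relpow_add)
  then have "?d i \<le> ?d (f p) + (?d i - p)" by (rule depth_le)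
  with le p(1) show ?thesis by linarith
qed

lemma strong_anc_on_shortest_path:
  assumes i: "i \<in> P" and path: "f 0 = s" "f (depth s rs N act i) = i"
      "\<forall>m<depth s rs N act i. (f m, f (Suc m)) \<in> R"
    and anc: "strong_anc s rs N act j i"
  shows "f (depth s rs N act j) = j \<and> depth s rs N act j \<le> depth s rs N act i"
proof -
  have "0 < depth s rs N act i"
    using path(1,2) i seller_notin_part by (metis gr0I)
  then obtain p where "p \<le> depth s rs N act i" "f p = j"
    using strong_anc_on_path[OF anc path(1,2) _ path(3)] by blast
  moreover have "depth s rs N act (f p) = p"
    using depth_on_shortest_path[OF i path] \<open>p \<le> _\<close> \<open>f p = j\<close> strong_anc_in_part[OF anc]
    by blast
  ultimately show ?thesis by simp
qed

lemma sca_seq_sorted: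
  assumes i: "i \<in> P"
  shows "sorted_wrt (\<lambda>x y. depth s rs N act x < depth s rs N act y) (sca_seq s rs N act i)
    \<and> set (sca_seq s rs N act i) = {j. strong_anc s rs N act j i}"
proof -
  let ?S = "{j. strong_anc s rs N act j i}"
  obtain f where path: "f 0 = s" "f (depth s rs N act i) = i"
    "\<forall>m<depth s rs N act i. (f m, f (Suc m)) \<in> R"
    using shortest_path[OF i] by blast
  have "finite ?S"
    using finite_part strong_anc_in_part by (metis mem_Collect_eq rev_finite_subset subsetI)
  moreover have "inj_on (depth s rs N act) ?S"
    using strong_anc_on_shortest_path[OF i path] by (metis (mono_tags, lifting) inj_onI mem_Collect_eq)
  ultimately show ?thesis
    unfolding sca_seq_def by (rule theI'[OF ex1_sorted_wrt_key])
qed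

lemma set_sca_seq: "i \<in> P \<Longrightarrow> set (sca_seq s rs N act i) = {j. strong_anc s rs N act j i}"
  using sca_seq_sorted by blast

lemma distinct_sca_seq: "i \<in> P \<Longrightarrow> distinct (sca_seq s rs N act i)"
  using sca_seq_sorted sorted_wrt_key_distinct by blast

lemma sca_seq_nonempty: "i \<in> P \<Longrightarrow> sca_seq s rs N act i \<noteq> []"
  using set_sca_seq strong_anc_self reachable by fastforce

lemma last_sca_seq:
  assumes i: "i \<in> P"
  shows "last (sca_seq s rs N act i) = i"
proof (rule sorted_wrt_key_last)
  obtain f where path: "f 0 = s" "f (depth s rs N act i) = i"
    "\<forall>m<depth s rs N act i. (f m, f (Suc m)) \<in> R"
    using shortest_path[OF i] by blast
  show "sorted_wrt (\<lambda>x y. depth s rs N act x < depth s rs N act y) (sca_seq s rs N act i)"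
    using sca_seq_sorted[OF i] by blast
  show "i \<in> set (sca_seq s rs N act i)"
    using set_sca_seq[OF i] strong_anc_self[OF i reachable[OF i]] by simp
  show "\<forall>j\<in>set (sca_seq s rs N act i). depth s rs N act j \<le> depth s rs N act i"
    using set_sca_seq[OF i] strong_anc_on_shortest_path[OF i path] by blast
qed

end

lemma fdm_M_subset_part: "fdm_M s rs N act h j \<subseteq> part N act"
  unfolding fdm_M_def Let_def Mset_def weak_anc_def critical_anc_def min_cut_set_def cut_set_def
  by auto

locale fdm_profile = reported_network +
  fixes h :: 'a and g :: "'a set \<Rightarrow> 'a"
  assumes h_part: "h \<in> P" and h_max: "\<forall>j\<in>P. rval act j \<le> rval act h"
begin

abbreviation C :: "'a list" where "C \<equiv> sca_seq s rs N act h"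
abbreviation w :: nat where "w \<equiv> fdm_w s rs N act h"
abbreviation M :: "nat \<Rightarrow> 'a set" where "M \<equiv> fdm_M s rs N act h"
abbreviation K :: "nat \<Rightarrow> 'a set" where "K \<equiv> fdm_K s rs N act h"
abbreviation vN :: "'a set \<Rightarrow> real" where "vN X \<equiv> v1st act (Nminus s rs N act X)"
abbreviation pay :: "'a \<Rightarrow> real" where "pay \<equiv> fdm_pay s rs N act h g"
abbreviation Rc :: "nat \<Rightarrow> real" where "Rc \<equiv> fdm_Rc s rs N act h g"
abbreviation RM :: "nat \<Rightarrow> 'a \<Rightarrow> real" where "RM \<equiv> fdm_RM s rs N act h"

lemma fdm_w_less_length: "w < length C"
proof -
  let ?l = "length C - 1"
  (* h itself satisfies the allocation condition, so w is not LEAST of an empty predicate *)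
  have "C ! ?l = h"
    using last_sca_seq[OF h_part] sca_seq_nonempty[OF h_part] by (simp add: last_conv_nth)
  moreover have "K ?l = {}"
    unfolding fdm_K_def Let_def using sca_seq_nonempty[OF h_part] by simp
  moreover have "vN {} = rval act h"
    using v1st_eq_rval[OF finite_part h_part rval_nonneg[OF h_part] h_max] by simp
  ultimately have "?l < length C \<and> rval act (C ! ?l) = vN (K ?l)"
    using sca_seq_nonempty[OF h_part] by simp
  then show ?thesis unfolding fdm_w_def Let_def by (rule LeastI2) blast
qed

lemma fdm_pay_sca:
  assumes "j \<le> w"
  shows "pay (C ! j) = vN {C ! j} - (if j < w then vN (K j) else 0) - Rc j"
proof -
  have j: "j < length C" using assms fdm_w_less_length by simp
  have "(LEAST j'. j' < length C \<and> C ! j' = C ! j) = j"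
    by (rule Least_equality) (use j distinct_sca_seq[OF h_part] nth_eq_iff_index_eq in auto)
  moreover have "\<exists>j'. j' \<le> w \<and> j' < length C \<and> C ! j' = C ! j" using assms j by blast
  ultimately show ?thesis unfolding fdm_pay_def Let_def by simp
qed

lemma fdm_RM_nonneg: "i \<in> M (j - 1) \<Longrightarrow> 0 \<le> RM j i"
  unfolding fdm_RM_def Let_def
  by (intro divide_nonneg_pos) (auto intro!: v1st_mono finite_Nminus Nminus_antimono)

lemma fdm_pay_notin_sca_ge:
  assumes "i \<notin> (!) C ` {..w}"
  shows "- (\<Sum>j\<in>{1..w}. if i \<in> M (j - 1) then RM j i else 0) \<le> pay i"
proof -
  have nonneg: "0 \<le> (\<Sum>j\<in>{1..w}. if i \<in> M (j - 1) then RM j i else 0)"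
    by (rule sum_nonneg) (simp add: fdm_RM_nonneg)
  have not_sca: "\<not> (\<exists>j. j \<le> w \<and> j < length C \<and> C ! j = i)" using assms by auto
  show ?thesis
  proof (cases "\<exists>j. 1 \<le> j \<and> j \<le> w \<and> i \<in> M (j - 1)")
    case True
    define j where "j = (LEAST j. 1 \<le> j \<and> j \<le> w \<and> i \<in> M (j - 1))"
    have j: "1 \<le> j \<and> j \<le> w \<and> i \<in> M (j - 1)"
      unfolding j_def using True by (rule LeastI_ex)
    have "pay i = - RM j i"
      unfolding fdm_pay_def Let_def if_not_P[OF not_sca] if_P[OF True] j_def ..
    moreover have "RM j i \<le> (\<Sum>j\<in>{1..w}. if i \<in> M (j - 1) then RM j i else 0)"
      using member_le_sum[of j "{1..w}" "\<lambda>j. if i \<in> M (j - 1) then RM j i else 0"]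
        j fdm_RM_nonneg by auto
    ultimately show ?thesis by simp
  next
    case False
    have "pay i = 0" unfolding fdm_pay_def Let_def if_not_P[OF not_sca] if_not_P[OF False] ..
    then show ?thesis using nonneg by simp
  qed
qed

lemma fdm_segment_rewards_le:
  assumes j: "1 \<le> j" "j \<le> w"
  shows "Rc j + (\<Sum>i\<in>M (j - 1). RM j i) \<le> vN {C ! j} - vN (K (j - 1))"
proof -
  let ?c = "real (card (M (j - 1))) + 1"
  let ?share = "(vN {C ! j} - vN (insert (C ! j) (M (j - 1)))) / ?c"
  have "Rc j \<le> ?share"
    unfolding fdm_Rc_def Let_def using j
    by (auto intro!: divide_right_mono v1st_mono finite_Nminus Nminus_antimono)
  moreover have "RM j i \<le> ?share" for i
  proof -
    have "vN {i, C ! j} \<le> vN {C ! j}" by (intro v1st_mono finite_Nminus Nminus_antimono) auto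
    then show ?thesis unfolding fdm_RM_def Let_def by (simp add: divide_right_mono)
  qed
  then have "(\<Sum>i\<in>M (j - 1). RM j i) \<le> (\<Sum>i\<in>M (j - 1). ?share)" by (rule sum_mono)
  ultimately have "Rc j + (\<Sum>i\<in>M (j - 1). RM j i) \<le> ?share + (\<Sum>i\<in>M (j - 1). ?share)"
    by (rule add_mono)
  also have "\<dots> = ?c * ?share"
    using sum_constant[of ?share "M (j - 1)"] by (simp only: distrib_right mult_1_left add.commute)
  also have "\<dots> = vN {C ! j} - vN (K (j - 1))"
    unfolding fdm_K_def Let_def using j fdm_w_less_length by simp
  finally show ?thesis .
qed

lemma fdm_pay_sca_sum:
  "(\<Sum>i\<in>(!) C ` {..w}. pay i) = (\<Sum>j\<le>w. vN {C ! j} - Rc j) - (\<Sum>j<w. vN (K j))"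
proof -
  have "inj_on ((!) C) {..w}"
    using distinct_sca_seq[OF h_part] fdm_w_less_length
    by (auto simp: inj_on_def nth_eq_iff_index_eq)
  then have "(\<Sum>i\<in>(!) C ` {..w}. pay i) = (\<Sum>j\<le>w. pay (C ! j))" by (simp add: sum.reindex)
  also have "\<dots> = (\<Sum>j\<le>w. (vN {C ! j} - Rc j) - (if j < w then vN (K j) else 0))"
    by (intro sum.cong) (simp_all add: fdm_pay_sca)
  also have "\<dots> = (\<Sum>j\<le>w. vN {C ! j} - Rc j) - (\<Sum>j<w. vN (K j))"
    by (simp add: sum_subtractf sum.If_cases lessThan_Suc_atMost[symmetric])
  finally show ?thesis .
qed

lemma fdm_pay_notin_sca_sum_ge:
  "- (\<Sum>j\<in>{1..w}. \<Sum>i\<in>M (j - 1). RM j i) \<le> (\<Sum>i\<in>P - (!) C ` {..w}. pay i)"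
proof -
  define T where "T i = (\<Sum>j\<in>{1..w}. if i \<in> M (j - 1) then RM j i else 0)" for i
  have "(\<Sum>i\<in>P. T i) = (\<Sum>j\<in>{1..w}. \<Sum>i\<in>P. if i \<in> M (j - 1) then RM j i else 0)"
    unfolding T_def by (rule sum.swap)
  also have "\<dots> = (\<Sum>j\<in>{1..w}. \<Sum>i\<in>M (j - 1). RM j i)"
    using finite_part by (simp add: sum.inter_restrict[symmetric] Int_absorb1[OF fdm_M_subset_part])
  finally have "(\<Sum>i\<in>P - (!) C ` {..w}. T i) \<le> (\<Sum>j\<in>{1..w}. \<Sum>i\<in>M (j - 1). RM j i)"
    using sum_mono2[OF finite_part, of "P - (!) C ` {..w}" T]
    by (simp add: T_def fdm_RM_nonneg sum_nonneg)
  moreover have "(\<Sum>i\<in>P - (!) C ` {..w}. - T i) \<le> (\<Sum>i\<in>P - (!) C ` {..w}. pay i)"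
    unfolding T_def by (intro sum_mono fdm_pay_notin_sca_ge) simp
  ultimately show ?thesis by (simp add: sum_negf)
qed

lemma idm_revenue_le_fdm_revenue: "vN {hd C} \<le> fdm_revenue s rs N act h g"
proof -
  define G where "G j = (\<Sum>i\<in>M (j - 1). RM j i)" for j
  have "set C \<subseteq> P" using set_sca_seq[OF h_part] by (auto dest: strong_anc_in_part)
  then have "(!) C ` {..w} \<subseteq> P" using fdm_w_less_length by (auto intro: subsetD[OF _ nth_mem])
  then have "fdm_revenue s rs N act h g
      = (\<Sum>i\<in>(!) C ` {..w}. pay i) + (\<Sum>i\<in>P - (!) C ` {..w}. pay i)"
    unfolding fdm_revenue_def using sum.subset_diff finite_part by (metis add.commute)
  then have "(\<Sum>j\<le>w. vN {C ! j} - Rc j) - (\<Sum>j<w. vN (K j)) - (\<Sum>j\<in>{1..w}. G j)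
      \<le> fdm_revenue s rs N act h g"
    using fdm_pay_sca_sum fdm_pay_notin_sca_sum_ge unfolding G_def by linarith
  moreover have "(\<Sum>j\<le>w. vN {C ! j} - Rc j) - (\<Sum>j<w. vN (K j)) - (\<Sum>j\<in>{1..w}. G j)
      = vN {C ! 0} + (\<Sum>j<w. vN {C ! Suc j} - vN (K j) - Rc (Suc j) - G (Suc j))"
    by (simp add: sum.atMost_shift sum.atLeast1_atMost_eq sum_subtractf fdm_Rc_def)
  moreover have "0 \<le> (\<Sum>j<w. vN {C ! Suc j} - vN (K j) - Rc (Suc j) - G (Suc j))"
  proof (rule sum_nonneg)
    fix j assume "j \<in> {..<w}"
    then show "0 \<le> vN {C ! Suc j} - vN (K j) - Rc (Suc j) - G (Suc j)"
      using fdm_segment_rewards_le[of "Suc j"] unfolding G_def by simp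
  qed
  moreover have "vN {hd C} = vN {C ! 0}"
    using sca_seq_nonempty[OF h_part] by (simp add: hd_conv_nth)
  ultimately show ?thesis by linarith
qed

end

theorem theorem3:
  fixes s :: 'a and N rs :: "'a set" and r :: "'a \<Rightarrow> 'a set"
    and act :: "'a \<Rightarrow> (real \<times> 'a set) option"
    and h :: 'a and g :: "'a set \<Rightarrow> 'a"
  assumes net: "valid_network s N rs r"
    and feas: "feasible s N rs r act"
    and h_max: "h \<in> part N act" "\<forall>j\<in>part N act. rval act j \<le> rval act h"
    and g_tie: "\<forall>D. D \<subseteq> part N act \<and> D \<noteq> {} \<longrightarrow> g D \<in> D \<and>
        (\<forall>j\<in>D. v1st act (Vset s rs N act j) \<le> v1st act (Vset s rs N act (g D)))"
  shows "v2nd act (rs \<inter> part N act)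
           \<le> v1st act (Nminus s rs N act {hd (sca_seq s rs N act h)})
         \<and> v1st act (Nminus s rs N act {hd (sca_seq s rs N act h)})
           \<le> fdm_revenue s rs N act h g"
proof -
  interpret fdm_profile s N rs r act h g
    by unfold_locales (use net feas h_max in auto)
  show ?thesis
    using v2nd_seller_neighbours_le_v1st_Nminus[OF finite_part] idm_revenue_le_fdm_revenue by blast
qed

end
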